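(* Let $s\ge1$ and $p\in F_{2,2s}$. Suppose $(a,b)$ and $(c,d)$ are both signatures of $p$ with $a>c$ and $b<d$. Then $a+d\ge s+3$, $b+c\ge s+1$, $\max\{a+b,c+d\}\ge s+2$, and $a,b,c,d\ge1$.
   Context: $F_{2,2s}$ is the space of real binary forms of degree $2s$ in $x,y$. A representation of $p\in F_{2,2s}$ is an expression $p=\sum_{j=1}^r\lambda_j(\alpha_jx+\beta_jy)^{2s}$ with $r\ge0$ (empty sum $=0$), $\alpha_j,\beta_j\in\mathbb R$, $0\ne\lambda_j\in\mathbb R$; it is honest if the linear forms $\alpha_jx+\beta_jy$ are pairwise non-proportional. Its badge is $(a,b)$ where $a=\#\{j:\lambda_j>0\}$, $b=\#\{j:\lambda_j<0\}$. $\mathcal B(p)$ is the set of badges of honest representations of $p$. Badges are ordered by $(a,b)\preceq(c,d)$ iff $a\le c$ and $b\le d$; a signature of $p$ is a minimal element of $\mathcal B(p)$ for $\preceq$. *)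

theory Defs
  imports Complex_Main
begin

text \<open>Real binary forms of degree d in x,y, viewed as functions of (x,y):
  p x y = sum_{k=0}^{d} c_k x^k y^(d-k).  F_{2,2s} is binary_form (2*s).\<close>
definition binary_form :: "nat \<Rightarrow> (real \<Rightarrow> real \<Rightarrow> real) \<Rightarrow> bool" where
  "binary_form d p \<longleftrightarrow> (\<exists>c :: nat \<Rightarrow> real. \<forall>x y. p x y = (\<Sum>k\<le>d. c k * x ^ k * y ^ (d - k)))"

definition is_rep :: "nat \<Rightarrow> (real \<Rightarrow> real \<Rightarrow> real) \<Rightarrow> (real \<times> real \<times> real) list \<Rightarrow> bool" where
  "is_rep s p L \<longleftrightarrow>
     (\<forall>t\<in>set L. fst t \<noteq> 0) \<and>
     (\<forall>x y. p x y = (\<Sum>(l, a, b)\<leftarrow>L. l * (a * x + b * y) ^ (2 * s)))"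

definition honest :: "(real \<times> real \<times> real) list \<Rightarrow> bool" where
  "honest L \<longleftrightarrow> (\<forall>i<length L. \<forall>j<length L. i \<noteq> j \<longrightarrow>
      (\<nexists>c. (fst (snd (L!i)) = c * fst (snd (L!j)) \<and> snd (snd (L!i)) = c * snd (snd (L!j))) \<or>
           (fst (snd (L!j)) = c * fst (snd (L!i)) \<and> snd (snd (L!j)) = c * snd (snd (L!i)))))"

definition badge :: "(real \<times> real \<times> real) list \<Rightarrow> nat \<times> nat" where
  "badge L = (length (filter (\<lambda>t. fst t > 0) L), length (filter (\<lambda>t. fst t < 0) L))"

definition badges :: "nat \<Rightarrow> (real \<Rightarrow> real \<Rightarrow> real) \<Rightarrow> (nat \<times> nat) set" where
  "badges s p = {badge L | L. is_rep s p L \<and> honest L}"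

definition badge_le :: "nat \<times> nat \<Rightarrow> nat \<times> nat \<Rightarrow> bool" where
  "badge_le u v \<longleftrightarrow> fst u \<le> fst v \<and> snd u \<le> snd v"

definition is_signature :: "nat \<Rightarrow> (real \<Rightarrow> real \<Rightarrow> real) \<Rightarrow> nat \<times> nat \<Rightarrow> bool" where
  "is_signature s p u \<longleftrightarrow> u \<in> badges s p \<and> (\<forall>v\<in>badges s p. badge_le v u \<longrightarrow> v = u)"

end

theory Submission
  imports Defs "HOL-Computational_Algebra.Polynomial" "HOL-Library.Multiset"
begin

text \<open>
  Let \<open>(a, b)\<close> and \<open>(c, d)\<close> be signatures of \<open>p\<close> with \<open>a > c\<close> and \<open>b < d\<close>, realised by
  honest representations \<open>L1\<close>, \<open>L2\<close> whose directions \<open>(\<alpha>, \<beta>)\<close> are non-zero.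

  (1) Cross bound \<open>b + c \<ge> s + 1\<close>.  Otherwise \<open>L1 - L2\<close> is a vanishing combination of
  \<open>2s\<close>-th powers with at most \<open>s\<close> negative terms (the negative terms of \<open>L1\<close> and the
  positive ones of \<open>L2\<close>).  The operator \<open>(v \<partial>x - u \<partial>y)\<^sup>2\<close> kills the powers of the form
  \<open>u x + v y\<close> and lowers the degree by two; applying it for every negative direction and
  evaluating at a positive direction \<open>(\<alpha>, \<beta>)\<close> leaves a sum of non-negative terms with a
  positive one, unless \<open>(\<alpha>, \<beta>)\<close> is parallel to a killed direction.  So every positive
  term of \<open>L1\<close> is parallel to a positive term of \<open>L2\<close>, injectively by honesty: \<open>a \<le> c\<close>.

  (2) A signature \<open>(a, 0)\<close> has \<open>a \<le> s + 1\<close>: a positive combination of \<open>s + 2\<close> pairwise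
  non-proportional \<open>2s\<close>-th powers is, after a projective change of chart, a positive
  discrete measure on \<open>s + 2\<close> nodes applied to a polynomial of degree \<open>2s\<close>; Gaussian
  quadrature replaces it by \<open>s + 1\<close> positive nodes, and merging proportional terms gives
  an honest positive representation with smaller badge.

  (3) Applying (2) to \<open>(a, b)\<close> and to the signature \<open>(d, c)\<close> of \<open>-p\<close> gives \<open>b, c \<ge> 1\<close>;
  the theorem then follows by arithmetic.
\<close>

definition node_product :: "(nat \<Rightarrow> real) \<Rightarrow> nat \<Rightarrow> nat \<Rightarrow> real" where
  "node_product t n i = (\<Prod>k\<in>{..<n}-{i}. t i - t k)"

definition lagrange_poly :: "(nat \<Rightarrow> real) \<Rightarrow> nat \<Rightarrow> nat \<Rightarrow> real poly" where
  "lagrange_poly t n i = smult (1 / node_product t n i) (\<Prod>k\<in>{..<n}-{i}. [:- t k, 1:])"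

lemma node_product_nonzero: "inj_on t {..<n} \<Longrightarrow> i < n \<Longrightarrow> node_product t n i \<noteq> 0"
  unfolding node_product_def by (auto simp: inj_on_def)

lemma poly_lagrange_poly:
  assumes "inj_on t {..<n}" "i < n" "j < n"
  shows "poly (lagrange_poly t n i) (t j) = (if j = i then 1 else 0)"
proof (cases "j = i")
  case True
  then show ?thesis using node_product_nonzero[OF assms(1,2)]
    by (simp add: lagrange_poly_def poly_prod node_product_def)
next
  case False
  then have "(\<Prod>k\<in>{..<n}-{i}. t j - t k) = 0" using assms(3) by (intro prod_zero) auto
  then show ?thesis using False by (simp add: lagrange_poly_def poly_prod)
qed

lemma degree_lagrange_poly:
  assumes "i < n"
  shows "degree (lagrange_poly t n i) \<le> n - 1"
proof -
  have "degree (\<Prod>k\<in>{..<n}-{i}. [:- t k, 1:]) = card ({..<n}-{i})"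
    by (subst degree_prod_sum_eq) auto
  also have "\<dots> = n - 1" using assms by simp
  finally show ?thesis by (simp add: lagrange_poly_def)
qed

lemma coeff_lagrange_poly:
  assumes "i < n"
  shows "coeff (lagrange_poly t n i) (n - 1) = 1 / node_product t n i"
proof -
  let ?q = "\<Prod>k\<in>{..<n}-{i}. [:- t k, 1:]"
  have "degree ?q = n - 1" using assms by (subst degree_prod_sum_eq) auto
  moreover have "lead_coeff ?q = 1" by (subst lead_coeff_prod) auto
  ultimately show ?thesis by (simp add: lagrange_poly_def)
qed

lemma lagrange_interpolation:
  assumes inj: "inj_on t {..<n}" and deg: "degree G < n"
  shows "G = (\<Sum>i<n. smult (poly G (t i)) (lagrange_poly t n i))"
proof (rule poly_eqI_degree[of "t ` {..<n}"])
  have card: "card (t ` {..<n}) = n" using inj by (simp add: card_image)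
  then show "degree G < card (t ` {..<n})" using deg by simp
  have "degree (\<Sum>i<n. smult (poly G (t i)) (lagrange_poly t n i)) \<le> n - 1"
    by (intro degree_sum_le order.trans[OF degree_smult_le] degree_lagrange_poly) auto
  then show "degree (\<Sum>i<n. smult (poly G (t i)) (lagrange_poly t n i)) < card (t ` {..<n})"
    using card deg by linarith
  fix x assume "x \<in> t ` {..<n}"
  then obtain j where j: "j < n" "x = t j" by auto
  have "poly (\<Sum>i<n. smult (poly G (t i)) (lagrange_poly t n i)) x
      = (\<Sum>i<n. poly G (t i) * (if j = i then 1 else 0))"
    using inj j by (simp add: poly_sum poly_lagrange_poly)
  also have "\<dots> = poly G x"
    by (subst sum.remove[of _ j]) (use j in auto)
  finally show "poly G x = poly (\<Sum>i<n. smult (poly G (t i)) (lagrange_poly t n i)) x" by simp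
qed

text \<open>The top divided difference of a polynomial of degree below \<open>n - 1\<close> vanishes: it is
  the coefficient of degree \<open>n - 1\<close> of its interpolation on \<open>n\<close> nodes.\<close>
lemma divided_difference_vanishes:
  assumes inj: "inj_on t {..<n}" and deg: "degree g < n - 1"
  shows "(\<Sum>i<n. poly g (t i) / node_product t n i) = 0"
proof -
  have "coeff g (n - 1) = (\<Sum>i<n. poly g (t i) * coeff (lagrange_poly t n i) (n - 1))"
    by (subst lagrange_interpolation[OF inj]) (use deg in \<open>simp_all add: coeff_sum\<close>)
  also have "\<dots> = (\<Sum>i<n. poly g (t i) / node_product t n i)"
    using coeff_lagrange_poly[of _ n t] by simp
  finally show ?thesis using deg by (simp add: coeff_eq_0)
qed

lemma node_product_sign:
  assumes mono: "strict_mono_on {..<n} t" and i: "i < n"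
  shows "node_product t n i = (-1) ^ (n - 1 - i) * (\<Prod>k\<in>{..<n}-{i}. \<bar>t i - t k\<bar>)"
proof -
  have split: "{..<n}-{i} = {..<i} \<union> {i<..<n}" and disj: "{..<i} \<inter> {i<..<n} = {}"
    using i by auto
  have less: "t k < t l" if "k < l" "l < n" for k l
    using that by (intro strict_mono_onD[OF mono]) auto
  have below: "(\<Prod>k\<in>{..<i}. t i - t k) = (\<Prod>k\<in>{..<i}. \<bar>t i - t k\<bar>)"
  proof (rule prod.cong)
    fix k assume "k \<in> {..<i}"
    then have "t k < t i" using less i by simp
    then show "t i - t k = \<bar>t i - t k\<bar>" by simp
  qed simp
  have "(\<Prod>k\<in>{i<..<n}. t i - t k) = (\<Prod>k\<in>{i<..<n}. (-1) * \<bar>t i - t k\<bar>)"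
  proof (rule prod.cong)
    fix k assume "k \<in> {i<..<n}"
    then have "t i < t k" using less by simp
    then show "t i - t k = (-1) * \<bar>t i - t k\<bar>" by simp
  qed simp
  also have "\<dots> = (-1) ^ (n - 1 - i) * (\<Prod>k\<in>{i<..<n}. \<bar>t i - t k\<bar>)"
    by (subst prod.distrib) simp
  finally show ?thesis
    unfolding node_product_def split prod.union_disjoint[OF _ _ disj, simplified] below by simp
qed

lemma node_product_alternates:
  assumes mono: "strict_mono_on {..<n} t" and i: "Suc i < n"
  shows "node_product t n i * node_product t n (Suc i) < 0"
proof -
  have inj: "inj_on t {..<n}" using strict_mono_on_imp_inj_on[OF mono] .
  define A where "A = (\<Prod>k\<in>{..<n}-{i}. \<bar>t i - t k\<bar>)"
  define B where "B = (\<Prod>k\<in>{..<n}-{Suc i}. \<bar>t (Suc i) - t k\<bar>)"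
  have "A > 0" "B > 0" unfolding A_def B_def
    using inj i by (auto intro!: prod_pos simp: inj_on_def)
  have odd: "n - 1 - i = Suc (n - 1 - Suc i)" using i by simp
  have sign: "(-1::real) ^ (n - 1 - i) * (-1) ^ (n - 1 - Suc i) = - 1"
    unfolding odd by (simp flip: power_mult_distrib)
  have "node_product t n i * node_product t n (Suc i)
      = ((-1) ^ (n - 1 - i) * (-1) ^ (n - 1 - Suc i)) * (A * B)"
    unfolding node_product_sign[OF mono i] node_product_sign[OF mono Suc_lessD[OF i]] A_def B_def
    by (simp add: mult_ac)
  then have "node_product t n i * node_product t n (Suc i) = - (A * B)"
    unfolding sign by simp
  then show ?thesis using \<open>A > 0\<close> \<open>B > 0\<close> by simp
qed

text \<open>The discrete measure with weights \<open>w i\<close> at the nodes \<open>t i\<close> (\<open>i < m\<close>), as a linear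
  functional on polynomials.\<close>
definition quad_sum :: "(nat \<Rightarrow> real) \<Rightarrow> (nat \<Rightarrow> real) \<Rightarrow> nat \<Rightarrow> real poly \<Rightarrow> real" where
  "quad_sum w t m f = (\<Sum>i<m. w i * poly f (t i))"

lemma quad_sum_add: "quad_sum w t m (f + g) = quad_sum w t m f + quad_sum w t m g"
  by (simp add: quad_sum_def algebra_simps sum.distrib)

lemma quad_sum_lincomb:
  "quad_sum w t m (\<Sum>j<n. smult (c j) (q j)) = (\<Sum>j<n. c j * quad_sum w t m (q j))"
  unfolding quad_sum_def poly_sum
  by (simp add: sum_distrib_left mult_ac) (rule sum.swap)

lemma quad_sum_square_pos:
  assumes w: "\<forall>i<m. w i > 0" and inj: "inj_on t {..<m}"
    and q: "q \<noteq> 0" "degree q < m"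
  shows "quad_sum w t m (q ^ 2) > 0"
proof -
  have "\<exists>i<m. poly q (t i) \<noteq> 0"
  proof (rule ccontr)
    assume "\<not> ?thesis"
    then have "q = 0"
      using inj q(2) by (intro poly_eqI_degree[of "t ` {..<m}"]) (auto simp: card_image)
    then show False using q(1) by simp
  qed
  then obtain i where i: "i < m" "poly q (t i) \<noteq> 0" by blast
  show ?thesis unfolding quad_sum_def
  proof (rule sum_pos2[of _ i])
    show "0 < w i * poly (q ^ 2) (t i)" using i w by simp
    show "\<And>k. k \<in> {..<m} \<Longrightarrow> 0 \<le> w k * poly (q ^ 2) (t k)"
      using w by (simp add: less_imp_le)
  qed (use i in auto)
qed

lemma quadrature_from_orthogonal:
  assumes inj: "inj_on r {..<n}" and nz: "\<omega> \<noteq> 0" and deg: "degree \<omega> = n"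
    and roots: "\<forall>j<n. poly \<omega> (r j) = 0"
    and orth: "\<forall>g. degree g < n \<longrightarrow> quad_sum w t m (\<omega> * g) = 0"
    and f: "degree f < 2 * n"
  shows "quad_sum w t m f = (\<Sum>j<n. quad_sum w t m (lagrange_poly r n j) * poly f (r j))"
proof -
  define g h where "g = f div \<omega>" and "h = f mod \<omega>"
  have fgh: "f = \<omega> * g + h" by (simp add: g_def h_def)
  have dh: "degree h < n"
    using degree_mod_less[OF nz, of f] deg f by (auto simp: h_def)
  have dg: "degree g < n"
  proof (cases "g = 0")
    case False
    have "n + degree g = degree (f - h)" using False nz deg fgh by (simp add: degree_mult_eq)
    also have "\<dots> \<le> max (degree f) (degree h)" by (rule degree_diff_le_max)
    finally show ?thesis using f dh by linarith
  qed (use deg f in simp)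
  have "quad_sum w t m f = quad_sum w t m h"
    using orth dg by (simp add: fgh quad_sum_add)
  also have "\<dots> = (\<Sum>j<n. poly h (r j) * quad_sum w t m (lagrange_poly r n j))"
    by (subst lagrange_interpolation[OF inj dh]) (rule quad_sum_lincomb)
  also have "\<dots> = (\<Sum>j<n. quad_sum w t m (lagrange_poly r n j) * poly f (r j))"
    using roots by (intro sum.cong) (simp_all add: fgh)
  finally show ?thesis .
qed

text \<open>For a positive measure on at least \<open>n\<close> nodes the Gaussian weights are positive, since the
  weight at \<open>r j\<close> is also the measure of the square of the \<open>j\<close>-th basis polynomial.\<close>
lemma quadrature_weights_pos:
  assumes inj: "inj_on r {..<n}" and nz: "\<omega> \<noteq> 0" and deg: "degree \<omega> = n"
    and roots: "\<forall>j<n. poly \<omega> (r j) = 0"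
    and orth: "\<forall>g. degree g < n \<longrightarrow> quad_sum w t m (\<omega> * g) = 0"
    and w: "\<forall>i<m. w i > 0" and injt: "inj_on t {..<m}" and nm: "n \<le> m" and j: "j < n"
  shows "quad_sum w t m (lagrange_poly r n j) > 0"
proof -
  let ?l = "lagrange_poly r n j"
  have dl: "degree ?l \<le> n - 1" by (rule degree_lagrange_poly[OF j])
  have "degree (?l ^ 2) < 2 * n"
    using degree_power_le[of ?l 2] dl j by linarith
  then have "quad_sum w t m (?l ^ 2)
      = (\<Sum>k<n. quad_sum w t m (lagrange_poly r n k) * poly (?l ^ 2) (r k))"
    by (rule quadrature_from_orthogonal[OF inj nz deg roots orth])
  also have "\<dots> = quad_sum w t m ?l"
    by (subst sum.remove[of _ j]) (use inj j in \<open>auto simp: poly_lagrange_poly\<close>)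
  finally have "quad_sum w t m (?l ^ 2) = quad_sum w t m ?l" .
  moreover have "?l \<noteq> 0" using poly_lagrange_poly[OF inj j j] by auto
  ultimately show ?thesis
    using quad_sum_square_pos[OF w injt] dl nm j by fastforce
qed

text \<open>For a positive measure on \<open>m\<close> nodes, \<open>orth_poly\<close> is the polynomial of degree \<open>m - 1\<close>
  with values \<open>1 / (w j * node_product t m j)\<close>; it is orthogonal to all lower degrees and,
  by the alternating signs of the node products, has a root between consecutive nodes.\<close>
definition orth_poly :: "(nat \<Rightarrow> real) \<Rightarrow> (nat \<Rightarrow> real) \<Rightarrow> nat \<Rightarrow> real poly" where
  "orth_poly w t m = (\<Sum>i<m. smult (1 / (w i * node_product t m i)) (lagrange_poly t m i))"

lemma poly_orth_poly:
  assumes inj: "inj_on t {..<m}" and j: "j < m"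
  shows "poly (orth_poly w t m) (t j) = 1 / (w j * node_product t m j)"
proof -
  have "poly (orth_poly w t m) (t j)
      = (\<Sum>i<m. 1 / (w i * node_product t m i) * (if j = i then 1 else 0))"
    using inj j by (simp add: orth_poly_def poly_sum poly_lagrange_poly)
  also have "\<dots> = 1 / (w j * node_product t m j)"
    by (subst sum.remove[of _ j]) (use j in auto)
  finally show ?thesis .
qed

lemma degree_orth_poly:
  assumes w: "\<forall>i<m. w i > 0" and inj: "inj_on t {..<m}" and m: "m \<ge> 1"
  shows "degree (orth_poly w t m) = m - 1"
proof -
  have "degree (orth_poly w t m) \<le> m - 1" unfolding orth_poly_def
    by (intro degree_sum_le order.trans[OF degree_smult_le] degree_lagrange_poly) auto
  moreover have "coeff (orth_poly w t m) (m - 1) = (\<Sum>i<m. 1 / (w i * (node_product t m i)\<^sup>2))"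
    unfolding orth_poly_def coeff_sum
    by (intro sum.cong) (simp_all add: coeff_lagrange_poly[simplified] power2_eq_square)
  moreover have "(\<Sum>i<m. 1 / (w i * (node_product t m i)\<^sup>2)) > 0"
    using w node_product_nonzero[OF inj] m by (intro sum_pos) (auto simp: lessThan_empty_iff)
  ultimately show ?thesis using le_degree by (metis antisym less_irrefl)
qed

lemma orth_poly_orthogonal:
  assumes w: "\<forall>i<m. w i > 0" and inj: "inj_on t {..<m}" and g: "degree g < m - 1"
  shows "quad_sum w t m (orth_poly w t m * g) = 0"
proof -
  have "quad_sum w t m (orth_poly w t m * g) = (\<Sum>i<m. poly g (t i) / node_product t m i)"
    unfolding quad_sum_def using w
    by (intro sum.cong) (simp_all add: poly_orth_poly[OF inj] less_imp_neq[symmetric])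
  also have "\<dots> = 0" by (rule divided_difference_vanishes[OF inj g])
  finally show ?thesis .
qed

lemma orth_poly_root_between:
  assumes w: "\<forall>i<m. w i > 0" and mono: "strict_mono_on {..<m} t" and j: "Suc j < m"
  shows "\<exists>x. t j < x \<and> x < t (Suc j) \<and> poly (orth_poly w t m) x = 0"
proof -
  have inj: "inj_on t {..<m}" by (rule strict_mono_on_imp_inj_on[OF mono])
  have "node_product t m j * node_product t m (Suc j) < 0"
    by (rule node_product_alternates[OF mono j])
  moreover have "w j * w (Suc j) > 0" using w j by simp
  ultimately have "(w j * w (Suc j)) * (node_product t m j * node_product t m (Suc j)) < 0"
    by (simp add: mult_pos_neg)
  moreover have "poly (orth_poly w t m) (t j) * poly (orth_poly w t m) (t (Suc j))
      = 1 / ((w j * w (Suc j)) * (node_product t m j * node_product t m (Suc j)))"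
    using j by (simp add: poly_orth_poly[OF inj] mult_ac)
  ultimately have "poly (orth_poly w t m) (t j) * poly (orth_poly w t m) (t (Suc j)) < 0"
    by simp
  moreover have "t j < t (Suc j)" using j by (intro strict_mono_onD[OF mono]) auto
  ultimately show ?thesis using poly_IVT by blast
qed

lemma gauss_quadrature_increasing:
  assumes w: "\<forall>i<Suc n. w i > 0" and mono: "strict_mono_on {..<Suc n} t"
  shows "\<exists>r u. (\<forall>j<n. u j > 0) \<and>
    (\<forall>f. degree f < 2 * n \<longrightarrow> quad_sum w t (Suc n) f = (\<Sum>j<n. u j * poly f (r j)))"
proof -
  define \<omega> where "\<omega> = orth_poly w t (Suc n)"
  have injt: "inj_on t {..<Suc n}" by (rule strict_mono_on_imp_inj_on[OF mono])
  have deg: "degree \<omega> = n" using degree_orth_poly[OF w injt] by (simp add: \<omega>_def)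
  have "w 0 > 0" using w by simp
  then have "poly \<omega> (t 0) \<noteq> 0"
    using poly_orth_poly[OF injt, of 0] node_product_nonzero[OF injt, of 0] by (simp add: \<omega>_def)
  then have nz: "\<omega> \<noteq> 0" by auto
  have orth: "\<forall>g. degree g < n \<longrightarrow> quad_sum w t (Suc n) (\<omega> * g) = 0"
    using orth_poly_orthogonal[OF w injt] by (simp add: \<omega>_def)
  obtain r where r: "\<And>j. j < n \<Longrightarrow> t j < r j \<and> r j < t (Suc j) \<and> poly \<omega> (r j) = 0"
    using orth_poly_root_between[OF w mono] unfolding \<omega>_def by (metis Suc_mono)
  have "strict_mono_on {..<n} r"
  proof (rule strict_mono_onI)
    fix i j assume ij: "i \<in> {..<n}" "j \<in> {..<n}" "i < j"
    have "t (Suc i) \<le> t j"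
      using ij by (cases "Suc i = j") (auto intro!: less_imp_le strict_mono_onD[OF mono])
    then show "r i < r j" using r[of i] r[of j] ij by force
  qed
  then have injr: "inj_on r {..<n}" by (rule strict_mono_on_imp_inj_on)
  have roots: "\<forall>j<n. poly \<omega> (r j) = 0" using r by blast
  show ?thesis
  proof (intro exI conjI allI impI)
    fix j assume "j < n"
    then show "quad_sum w t (Suc n) (lagrange_poly r n j) > 0"
      using quadrature_weights_pos[OF injr nz deg roots orth w injt] by simp
  next
    fix f :: "real poly" assume "degree f < 2 * n"
    then show "quad_sum w t (Suc n) f
        = (\<Sum>j<n. quad_sum w t (Suc n) (lagrange_poly r n j) * poly f (r j))"
      by (rule quadrature_from_orthogonal[OF injr nz deg roots orth])
  qed
qed

lemma gauss_quadrature: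
  fixes P :: "(real \<times> real) list"
  assumes dist: "distinct (map fst P)" and len: "length P = Suc n"
    and pos: "\<forall>q\<in>set P. snd q > 0"
  shows "\<exists>Q. length Q = n \<and> (\<forall>q\<in>set Q. snd q > 0) \<and>
    (\<forall>f. degree f < 2 * n \<longrightarrow> (\<Sum>q\<leftarrow>P. snd q * poly f (fst q)) = (\<Sum>q\<leftarrow>Q. snd q * poly f (fst q)))"
proof -
  define Ps where "Ps = sort_key fst P"
  define t w where "t i = fst (Ps ! i)" and "w i = snd (Ps ! i)" for i
  have perm: "mset Ps = mset P" and lenPs: "length Ps = Suc n" by (simp_all add: Ps_def len)
  have "distinct (map fst Ps)" using dist perm by (metis mset_eq_imp_distinct_iff mset_map)
  then have sorted: "sorted_wrt (<) (map fst Ps)" by (simp add: Ps_def strict_sorted_iff)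
  have mono: "strict_mono_on {..<Suc n} t"
    using sorted_wrt_nth_less[OF sorted] lenPs by (intro strict_mono_onI) (simp add: t_def)
  have w: "\<forall>i<Suc n. w i > 0"
  proof (intro allI impI)
    fix i assume "i < Suc n"
    then have "Ps ! i \<in> set P" using lenPs by (metis nth_mem perm set_mset_mset)
    then show "w i > 0" using pos by (simp add: w_def)
  qed
  obtain r u where ru: "\<forall>j<n. u j > 0"
    "\<forall>f. degree f < 2 * n \<longrightarrow> quad_sum w t (Suc n) f = (\<Sum>j<n. u j * poly f (r j))"
    using gauss_quadrature_increasing[OF w mono] by blast
  show ?thesis
  proof (intro exI conjI allI impI)
    let ?Q = "map (\<lambda>j. (r j, u j)) [0..<n]"
    show "length ?Q = n" by simp
    show "\<forall>q\<in>set ?Q. snd q > 0" using ru(1) by auto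
    fix f :: "real poly" assume f: "degree f < 2 * n"
    have "(\<Sum>q\<leftarrow>P. snd q * poly f (fst q)) = (\<Sum>q\<leftarrow>Ps. snd q * poly f (fst q))"
      by (simp only: perm mset_map flip: sum_mset_sum_list)
    also have "\<dots> = quad_sum w t (Suc n) f"
      by (simp add: quad_sum_def sum_list_sum_nth lenPs atLeast0LessThan t_def w_def)
    also have "\<dots> = (\<Sum>q\<leftarrow>?Q. snd q * poly f (fst q))"
      using ru(2) f by (simp add: interv_sum_list_conv_sum_set_nat atLeast0LessThan o_def)
    finally show "(\<Sum>q\<leftarrow>P. snd q * poly f (fst q)) = (\<Sum>q\<leftarrow>?Q. snd q * poly f (fst q))" .
  qed
qed

definition power_sum :: "(real \<times> real \<times> real) list \<Rightarrow> nat \<Rightarrow> real \<Rightarrow> real \<Rightarrow> real" where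
  "power_sum L n x y = (\<Sum>(l, a, b)\<leftarrow>L. l * (a * x + b * y) ^ n)"

definition scale_coeffs ::
    "(real \<Rightarrow> real \<Rightarrow> real) \<Rightarrow> (real \<times> real \<times> real) list \<Rightarrow> (real \<times> real \<times> real) list" where
  "scale_coeffs g L = map (\<lambda>(l, a, b). (l * g a b, a, b)) L"

definition det2 :: "real \<times> real \<Rightarrow> real \<times> real \<Rightarrow> real" where
  "det2 u v = fst u * snd v - snd u * fst v"

lemma power_sum_Nil [simp]: "power_sum [] n x y = 0"
  by (simp add: power_sum_def)

lemma power_sum_Cons [simp]:
  "power_sum ((l, a, b) # L) n x y = l * (a * x + b * y) ^ n + power_sum L n x y"
  by (simp add: power_sum_def)

lemma power_sum_append: "power_sum (L @ M) n x y = power_sum L n x y + power_sum M n x y"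
  by (simp add: power_sum_def)

lemma power_sum_scale_coeffs:
  "power_sum (scale_coeffs g L) n x y = (\<Sum>(l, a, b)\<leftarrow>L. l * g a b * (a * x + b * y) ^ n)"
  by (induction L) (auto simp: scale_coeffs_def power_sum_def)

lemma scale_coeffs_scale_coeffs:
  "scale_coeffs g (scale_coeffs h L) = scale_coeffs (\<lambda>a b. h a b * g a b) L"
  by (simp add: scale_coeffs_def case_prod_beta mult.assoc)

lemma power_sum_deriv_x:
  "((\<lambda>x. power_sum L (Suc n) x y) has_real_derivative
     Suc n * power_sum (scale_coeffs (\<lambda>a b. a) L) n x y) (at x)"
proof (induction L)
  case (Cons t L)
  obtain l a b where t: "t = (l, a, b)" by (cases t)
  have "((\<lambda>x. a * x + b * y) has_real_derivative a) (at x)"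
    by (auto intro!: derivative_eq_intros)
  from DERIV_cmult[OF DERIV_power_Suc[OF this, of n], of l]
  have "((\<lambda>x. l * (a * x + b * y) ^ Suc n) has_real_derivative
      l * (Suc n * (a * x + b * y) ^ n * a)) (at x)"
    by (simp add: algebra_simps)
  from DERIV_add[OF this Cons.IH] show ?case
    unfolding t by (simp add: scale_coeffs_def algebra_simps)
qed (simp add: scale_coeffs_def)

lemma power_sum_deriv_y:
  "((\<lambda>y. power_sum L (Suc n) x y) has_real_derivative
     Suc n * power_sum (scale_coeffs (\<lambda>a b. b) L) n x y) (at y)"
proof (induction L)
  case (Cons t L)
  obtain l a b where t: "t = (l, a, b)" by (cases t)
  have "((\<lambda>y. a * x + b * y) has_real_derivative b) (at y)"
    by (auto intro!: derivative_eq_intros)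
  from DERIV_cmult[OF DERIV_power_Suc[OF this, of n], of l]
  have "((\<lambda>y. l * (a * x + b * y) ^ Suc n) has_real_derivative
      l * (Suc n * (a * x + b * y) ^ n * b)) (at y)"
    by (simp add: algebra_simps)
  from DERIV_add[OF this Cons.IH] show ?case
    unfolding t by (simp add: scale_coeffs_def algebra_simps)
qed (simp add: scale_coeffs_def)

lemma power_sum_annihilate:
  assumes zero: "\<forall>x y. power_sum L (Suc n) x y = 0"
  shows "\<forall>x y. power_sum (scale_coeffs (\<lambda>a b. det2 (a, b) k) L) n x y = 0"
proof (intro allI)
  fix x y
  have "(\<lambda>x. power_sum L (Suc n) x y) = (\<lambda>_. 0)" "(\<lambda>y. power_sum L (Suc n) x y) = (\<lambda>_. 0)"
    using zero by auto
  then have "((\<lambda>x. power_sum L (Suc n) x y) has_real_derivative 0) (at x)"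
    "((\<lambda>y. power_sum L (Suc n) x y) has_real_derivative 0) (at y)"
    by simp_all
  then have "Suc n * power_sum (scale_coeffs (\<lambda>a b. a) L) n x y = 0"
    "Suc n * power_sum (scale_coeffs (\<lambda>a b. b) L) n x y = 0"
    using DERIV_unique power_sum_deriv_x power_sum_deriv_y by blast+
  moreover have "power_sum (scale_coeffs (\<lambda>a b. det2 (a, b) k) L) n x y
      = snd k * power_sum (scale_coeffs (\<lambda>a b. a) L) n x y
        - fst k * power_sum (scale_coeffs (\<lambda>a b. b) L) n x y"
    by (induction L) (auto simp: scale_coeffs_def det2_def algebra_simps)
  ultimately show "power_sum (scale_coeffs (\<lambda>a b. det2 (a, b) k) L) n x y = 0"
    by simp
qed

lemma power_sum_annihilate_list:
  assumes "\<forall>x y. power_sum L (n + 2 * length ks) x y = 0"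
  shows "\<forall>x y. power_sum (scale_coeffs (\<lambda>a b. \<Prod>k\<leftarrow>ks. (det2 (a, b) k)\<^sup>2) L) n x y = 0"
  using assms
proof (induction ks arbitrary: n)
  case Nil
  then show ?case by (simp add: scale_coeffs_def case_prod_beta)
next
  case (Cons k ks)
  have "\<forall>x y. power_sum L (Suc (Suc n) + 2 * length ks) x y = 0" using Cons.prems by simp
  then have "\<forall>x y. power_sum (scale_coeffs (\<lambda>a b. \<Prod>k\<leftarrow>ks. (det2 (a, b) k)\<^sup>2) L) (Suc (Suc n)) x y = 0"
    by (rule Cons.IH)
  then have "\<forall>x y. power_sum (scale_coeffs (\<lambda>a b. det2 (a, b) k)
      (scale_coeffs (\<lambda>a b. det2 (a, b) k)
        (scale_coeffs (\<lambda>a b. \<Prod>k\<leftarrow>ks. (det2 (a, b) k)\<^sup>2) L))) n x y = 0"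
    by (intro power_sum_annihilate)
  then show ?case by (simp add: scale_coeffs_scale_coeffs power2_eq_square mult_ac)
qed

text \<open>Otherwise, annihilating \<open>ks\<close> leaves an even power sum with
  non-negative coefficients, which is positive at that direction.\<close>
lemma positive_term_parallel:
  assumes zero: "\<forall>x y. power_sum L (2 * s) x y = 0" and len: "length ks \<le> s"
    and neg: "\<forall>(l, a, b)\<in>set L. l < 0 \<longrightarrow> (a, b) \<in> set ks"
    and mem: "(l0, a0, b0) \<in> set L" and l0: "l0 > 0" and nz: "(a0, b0) \<noteq> (0, 0)"
  shows "\<exists>k\<in>set ks. det2 (a0, b0) k = 0"
proof (rule ccontr)
  assume nk: "\<not> ?thesis"
  define n where "n = 2 * (s - length ks)"
  define summand where "summand = (\<lambda>(l, a, b).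
    l * (\<Prod>k\<leftarrow>ks. (det2 (a, b) k)\<^sup>2) * (a * a0 + b * b0) ^ n)"
  have "2 * s = n + 2 * length ks" using len by (simp add: n_def)
  then have "power_sum (scale_coeffs (\<lambda>a b. \<Prod>k\<leftarrow>ks. (det2 (a, b) k)\<^sup>2) L) n a0 b0 = 0"
    using power_sum_annihilate_list[of L n ks] zero by simp
  then have sum0: "(\<Sum>t\<leftarrow>L. summand t) = 0"
    by (simp add: power_sum_scale_coeffs summand_def)
  have nonneg: "summand t \<ge> 0" if "t \<in> set L" for t
  proof -
    obtain l a b where t: "t = (l, a, b)" by (cases t)
    have "(a * a0 + b * b0) ^ n \<ge> 0" by (simp add: n_def power_mult)
    moreover have "(\<Prod>k\<leftarrow>ks. (det2 (a, b) k)\<^sup>2) \<ge> 0" by (rule prod_list_nonneg) auto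
    moreover have "(\<Prod>k\<leftarrow>ks. (det2 (a, b) k)\<^sup>2) = 0" if "l < 0"
      using neg \<open>t \<in> set L\<close> t that by (force simp: prod_list_zero_iff det2_def)
    ultimately show ?thesis unfolding t summand_def by (cases "l < 0") auto
  qed
  have "(\<Prod>k\<leftarrow>ks. (det2 (a0, b0) k)\<^sup>2) > 0"
    using nk by (induction ks) auto
  moreover have "a0 * a0 + b0 * b0 > 0" using nz by (simp add: sum_squares_gt_zero_iff)
  ultimately have pos: "summand (l0, a0, b0) > 0" using l0 by (simp add: summand_def)
  have "summand (l0, a0, b0) \<le> (\<Sum>t\<leftarrow>L. summand t)"
    by (rule member_le_sum_list) (use mem nonneg in auto)
  then show False using sum0 pos by simp
qed

definition proportional :: "real \<times> real \<Rightarrow> real \<times> real \<Rightarrow> bool" where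
  "proportional u v \<longleftrightarrow>
     (\<exists>c. (fst u = c * fst v \<and> snd u = c * snd v) \<or> (fst v = c * fst u \<and> snd v = c * snd u))"

lemma honest_iff_proportional:
  "honest L \<longleftrightarrow>
     (\<forall>i<length L. \<forall>j<length L. i \<noteq> j \<longrightarrow> \<not> proportional (snd (L ! i)) (snd (L ! j)))"
  unfolding honest_def proportional_def by blast

lemma proportional_sym: "proportional u v \<longleftrightarrow> proportional v u"
  unfolding proportional_def by blast

lemma proportional_det2: "proportional u v \<Longrightarrow> det2 u v = 0"
  unfolding proportional_def det2_def by (auto simp: algebra_simps)

lemma det2_zero_multiple:
  assumes "det2 u v = 0" "v \<noteq> (0, 0)"
  shows "\<exists>c. fst u = c * fst v \<and> snd u = c * snd v"
proof (cases "fst v = 0")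
  case True
  then have "snd v \<noteq> 0" using assms(2) by (cases v) auto
  then show ?thesis using assms(1) True
    by (intro exI[of _ "snd u / snd v"]) (auto simp: det2_def field_simps)
next
  case False
  then show ?thesis using assms(1)
    by (intro exI[of _ "fst u / fst v"]) (auto simp: det2_def field_simps)
qed

lemma det2_zero_proportional: "det2 u v = 0 \<Longrightarrow> v \<noteq> (0, 0) \<Longrightarrow> proportional u v"
  using det2_zero_multiple unfolding proportional_def by blast

lemma det2_zero_trans:
  assumes "det2 u w = 0" "det2 v w = 0" "w \<noteq> (0, 0)"
  shows "det2 u v = 0"
proof -
  have "det2 u v * fst w = fst v * det2 u w - fst u * det2 v w"
    "det2 u v * snd w = snd v * det2 u w - snd u * det2 v w"
    by (simp_all add: det2_def algebra_simps)
  then have "det2 u v * fst w = 0" "det2 u v * snd w = 0" using assms(1,2) by simp_all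
  then show ?thesis using assms(3) by (cases w) auto
qed

lemma honest_det2:
  assumes "honest L" "i < length L" "j < length L" "i \<noteq> j" "snd (L ! j) \<noteq> (0, 0)"
  shows "det2 (snd (L ! i)) (snd (L ! j)) \<noteq> 0"
  using assms det2_zero_proportional unfolding honest_iff_proportional by blast

lemma honest_Cons:
  "honest (t # L) \<longleftrightarrow> honest L \<and> (\<forall>j<length L. \<not> proportional (snd t) (snd (L ! j)))"
  unfolding honest_iff_proportional
  by (auto simp: nth_Cons split: nat.splits; metis proportional_sym Suc_less_eq nat.inject)

lemma honest_update:
  assumes "honest L" "j < length L" "snd v = snd (L ! j)"
  shows "honest (L[j := v])"
  using assms unfolding honest_iff_proportional by (auto simp: nth_list_update)

lemma honest_take: "honest L \<Longrightarrow> honest (take k L)"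
  unfolding honest_iff_proportional by auto

text \<open>In an honest representation with at least two terms no direction vanishes, since the
  zero vector is proportional to every vector.\<close>
lemma honest_nonzero_direction:
  assumes "honest L" "length L \<ge> 2" "t \<in> set L"
  shows "snd t \<noteq> (0, 0)"
proof
  assume zero: "snd t = (0, 0)"
  obtain i where i: "i < length L" "L ! i = t" using assms(3) by (auto simp: in_set_conv_nth)
  define j where "j = (if i = 0 then 1 else 0 :: nat)"
  have j: "j < length L" "j \<noteq> i" using assms(2) by (auto simp: j_def)
  have "proportional (snd (L ! i)) (snd (L ! j))"
    using zero i unfolding proportional_def by (auto intro!: exI[of _ 0])
  then show False using assms(1) i j unfolding honest_iff_proportional by auto
qed

definition positive_terms :: "(real \<times> real \<times> real) list \<Rightarrow> bool" where
  "positive_terms L \<longleftrightarrow> (\<forall>t\<in>set L. fst t > 0 \<and> snd t \<noteq> (0, 0))"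

lemma power_sum_update:
  assumes "j < length L"
  shows "power_sum (L[j := (l, a, b)]) n x y
    = power_sum L n x y - (case L ! j of (l', a', b') \<Rightarrow> l' * (a' * x + b' * y) ^ n)
      + l * (a * x + b * y) ^ n"
  using assms
proof (induction L arbitrary: j)
  case (Cons t L)
  then show ?case by (cases j) (auto simp: power_sum_def split: prod.splits)
qed simp

lemma add_to_proportional_term:
  assumes pos: "positive_terms M" and j: "j < length M" and Mj: "M ! j = (l', p, q)"
    and c: "a = c * p" "b = c * q" and l: "l > 0"
  shows "positive_terms (M[j := (l' + l * c ^ (2 * s), p, q)])"
    and "power_sum (M[j := (l' + l * c ^ (2 * s), p, q)]) (2 * s) x y
      = l * (a * x + b * y) ^ (2 * s) + power_sum M (2 * s) x y"
proof -
  have "l' > 0" "(p, q) \<noteq> (0, 0)"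
    using pos j Mj unfolding positive_terms_def by (metis nth_mem fst_conv snd_conv)+
  moreover have "0 \<le> l * c ^ (2 * s)" using l by (simp add: power_mult)
  ultimately show "positive_terms (M[j := (l' + l * c ^ (2 * s), p, q)])"
    using pos unfolding positive_terms_def by (auto dest!: set_update_subset_insert[THEN subsetD])
  have "(a * x + b * y) ^ (2 * s) = c ^ (2 * s) * (p * x + q * y) ^ (2 * s)"
    by (simp add: c power_mult_distrib[symmetric] algebra_simps)
  then show "power_sum (M[j := (l' + l * c ^ (2 * s), p, q)]) (2 * s) x y
      = l * (a * x + b * y) ^ (2 * s) + power_sum M (2 * s) x y"
    using j by (simp add: power_sum_update Mj algebra_simps)
qed

text \<open>Adding up proportional terms turns a positive representation into an honest one with at
  most as many terms; even powers keep the merged coefficients positive.\<close>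
lemma merge_proportional_terms:
  assumes "positive_terms M"
  shows "\<exists>M'. honest M' \<and> positive_terms M' \<and> length M' \<le> length M \<and>
    (\<forall>x y. power_sum M' (2 * s) x y = power_sum M (2 * s) x y)"
  using assms
proof (induction M)
  case Nil
  then show ?case by (intro exI[of _ "[]"]) (auto simp: honest_def)
next
  case (Cons t M)
  then obtain M' where M': "honest M'" "positive_terms M'" "length M' \<le> length M"
    "\<forall>x y. power_sum M' (2 * s) x y = power_sum M (2 * s) x y"
    by (auto simp: positive_terms_def)
  obtain l a b where t: "t = (l, a, b)" by (cases t)
  have l: "l > 0" using Cons.prems t by (simp add: positive_terms_def)
  show ?case
  proof (cases "\<exists>j<length M'. det2 (a, b) (snd (M' ! j)) = 0")
    case True
    then obtain j where j: "j < length M'" "det2 (a, b) (snd (M' ! j)) = 0" by blast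
    obtain l' p q where Mj: "M' ! j = (l', p, q)" by (cases "M' ! j")
    have pq: "(p, q) \<noteq> (0, 0)"
      using M'(2) j(1) Mj unfolding positive_terms_def by (metis nth_mem snd_conv)
    obtain c where c: "a = c * p" "b = c * q" using det2_zero_multiple[OF j(2)] Mj pq by auto
    define M'' where "M'' = M'[j := (l' + l * c ^ (2 * s), p, q)]"
    have merged: "positive_terms M''"
      "\<forall>x y. power_sum M'' (2 * s) x y = l * (a * x + b * y) ^ (2 * s) + power_sum M' (2 * s) x y"
      using add_to_proportional_term[OF M'(2) j(1) Mj c l] by (simp_all add: M''_def)
    show ?thesis
    proof (intro exI[of _ M''] conjI)
      show "honest M''" unfolding M''_def by (rule honest_update) (use M' j Mj in auto)
      show "positive_terms M''" by (rule merged(1))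
      show "length M'' \<le> length (t # M)" using M'(3) by (simp add: M''_def)
      show "\<forall>x y. power_sum M'' (2 * s) x y = power_sum (t # M) (2 * s) x y"
        using merged(2) M'(4) t by simp
    qed
  next
    case False
    show ?thesis
    proof (intro exI[of _ "t # M'"] conjI)
      show "honest (t # M')" unfolding honest_Cons t using M'(1) False by (auto dest: proportional_det2)
      show "positive_terms (t # M')" using M'(2) Cons.prems by (simp add: positive_terms_def)
      show "length (t # M') \<le> length (t # M)" using M'(3) by simp
      show "\<forall>x y. power_sum (t # M') (2 * s) x y = power_sum (t # M) (2 * s) x y"
        using M'(4) t by simp
    qed
  qed
qed

lemma power_in_chart:
  fixes a b r x y :: real
  assumes "b + r * a \<noteq> 0"
  shows "(a * x + b * y) ^ n = (b + r * a) ^ n * (a / (b + r * a) * (x - r * y) + y) ^ n"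
proof -
  have "(b + r * a) * (a / (b + r * a) * (x - r * y) + y)
      = (b + r * a) * (a / (b + r * a)) * (x - r * y) + (b + r * a) * y"
    by (simp only: distrib_left mult.assoc)
  also have "\<dots> = a * (x - r * y) + (b + r * a) * y" using assms by simp
  also have "\<dots> = a * x + b * y" by (simp add: algebra_simps)
  finally show ?thesis by (simp flip: power_mult_distrib)
qed

lemma equal_chart_slopes_proportional:
  assumes "b + r * a \<noteq> 0" "b' + r * a' \<noteq> 0" "a / (b + r * a) = a' / (b' + r * a')"
  shows "proportional (a, b) (a', b')"
proof -
  define c where "c = (b + r * a) / (b' + r * a')"
  have "a = c * a'" using assms by (simp add: c_def field_simps)
  moreover have "b = c * b'"
  proof -
    have "b = (b + r * a) - r * a" by simp
    also have "\<dots> = c * (b' + r * a') - r * (c * a')" using assms(2) \<open>a = c * a'\<close> by (simp add: c_def)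
    finally show ?thesis by (simp add: algebra_simps)
  qed
  ultimately show ?thesis unfolding proportional_def by auto
qed

lemma exists_chart:
  fixes S :: "(real \<times> real) set"
  assumes "finite S" "(0, 0) \<notin> S"
  shows "\<exists>r. \<forall>(a, b)\<in>S. b + r * a \<noteq> 0"
proof -
  have "finite ((\<lambda>(a, b). - b / a) ` S)" using assms(1) by simp
  then obtain r :: real where r: "r \<notin> (\<lambda>(a, b). - b / a) ` S"
    using ex_new_if_finite[OF infinite_UNIV_char_0] by blast
  have "b + r * a \<noteq> 0" if "(a, b) \<in> S" for a b
  proof
    assume zero: "b + r * a = 0"
    show False
    proof (cases "a = 0")
      case True
      then show False using zero that assms(2) by simp
    next
      case False
      then have "r = - b / a" using zero by (simp add: field_simps)
      then show False using r that by force
    qed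
  qed
  then show ?thesis by blast
qed

text \<open>In the chart \<open>r\<close>, a representation \<open>L\<close> becomes the discrete measure \<open>chart_measure r n L\<close>
  with nodes the slopes and weights \<open>\<lambda> (\<beta> + r \<alpha>)^n\<close>; conversely a measure \<open>Q\<close> gives back the
  representation \<open>chart_rep r Q\<close>.\<close>
definition chart_measure :: "real \<Rightarrow> nat \<Rightarrow> (real \<times> real \<times> real) list \<Rightarrow> (real \<times> real) list" where
  "chart_measure r n L = map (\<lambda>(l, a, b). (a / (b + r * a), l * (b + r * a) ^ n)) L"

definition chart_rep :: "real \<Rightarrow> (real \<times> real) list \<Rightarrow> (real \<times> real \<times> real) list" where
  "chart_rep r Q = map (\<lambda>(z, u). (u, z, 1 - r * z)) Q"

lemma power_sum_chart_measure:
  assumes chart: "\<And>l a b. (l, a, b) \<in> set L \<Longrightarrow> b + r * a \<noteq> 0"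
  shows "power_sum L n x y
    = (\<Sum>q\<leftarrow>chart_measure r n L. snd q * poly ([:y, x - r * y:] ^ n) (fst q))"
  unfolding chart_measure_def power_sum_def map_map
proof (intro arg_cong[where f = sum_list] map_cong refl)
  fix t assume "t \<in> set L"
  moreover obtain l a b where t: "t = (l, a, b)" by (cases t)
  ultimately have "l * (a * x + b * y) ^ n
      = l * (b + r * a) ^ n * poly ([:y, x - r * y:] ^ n) (a / (b + r * a))"
    using power_in_chart[OF chart, of l a b x y n] by (simp add: poly_power algebra_simps)
  then show "(\<lambda>(l, a, b). l * (a * x + b * y) ^ n) t
      = ((\<lambda>q. snd q * poly ([:y, x - r * y:] ^ n) (fst q)) \<circ>
          (\<lambda>(l, a, b). (a / (b + r * a), l * (b + r * a) ^ n))) t"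
    unfolding t comp_def case_prod_conv fst_conv snd_conv .
qed

lemma power_sum_chart_rep:
  "power_sum (chart_rep r Q) n x y = (\<Sum>q\<leftarrow>Q. snd q * poly ([:y, x - r * y:] ^ n) (fst q))"
  unfolding chart_rep_def power_sum_def map_map
proof (intro arg_cong[where f = sum_list] map_cong refl)
  fix q :: "real \<times> real"
  obtain z u where q: "q = (z, u)" by (cases q)
  have "z * x + (1 - r * z) * y = y + z * (x - r * y)" by (simp add: algebra_simps)
  then show "((\<lambda>(l, a, b). l * (a * x + b * y) ^ n) \<circ> (\<lambda>(z, u). (u, z, 1 - r * z))) q
      = snd q * poly ([:y, x - r * y:] ^ n) (fst q)"
    by (simp add: q poly_power)
qed

lemma chart_measure_distinct:
  assumes hon: "honest L" and chart: "\<And>l a b. (l, a, b) \<in> set L \<Longrightarrow> b + r * a \<noteq> 0"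
  shows "distinct (map fst (chart_measure r n L))"
proof (subst distinct_conv_nth, intro allI impI)
  fix i j assume ij: "i < length (map fst (chart_measure r n L))"
    "j < length (map fst (chart_measure r n L))" "i \<noteq> j"
  obtain l a b l' a' b' where Li: "L ! i = (l, a, b)" and Lj: "L ! j = (l', a', b')"
    by (cases "L ! i", cases "L ! j")
  have "L ! i \<in> set L" "L ! j \<in> set L" using ij by (simp_all add: chart_measure_def)
  then have "b + r * a \<noteq> 0" "b' + r * a' \<noteq> 0" using chart Li Lj by simp_all
  moreover have "\<not> proportional (snd (L ! i)) (snd (L ! j))"
    using hon ij unfolding honest_iff_proportional by (simp add: chart_measure_def)
  ultimately show "map fst (chart_measure r n L) ! i \<noteq> map fst (chart_measure r n L) ! j"
    using ij equal_chart_slopes_proportional by (auto simp: chart_measure_def Li Lj)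
qed

text \<open>An honest positive representation with \<open>n + 1 > s + 1\<close> terms of a form of degree \<open>2s\<close>
  can be replaced by a positive one with \<open>n\<close> terms: in a chart the form is a positive
  discrete measure applied to a polynomial of degree \<open>2s < 2n\<close>, so Gaussian quadrature
  applies.\<close>
lemma positive_rep_shorten:
  assumes hon: "honest L" and pos: "positive_terms L" and len: "length L = Suc n" and sn: "s < n"
  shows "\<exists>N. length N = n \<and> positive_terms N \<and>
    (\<forall>x y. power_sum N (2 * s) x y = power_sum L (2 * s) x y)"
proof -
  obtain r where r: "\<forall>(a, b)\<in>snd ` set L. b + r * a \<noteq> 0"
    using exists_chart[of "snd ` set L"] pos by (force simp: positive_terms_def)
  have chart: "b + r * a \<noteq> 0" if "(l, a, b) \<in> set L" for l a b
    using r that by force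
  let ?P = "chart_measure r (2 * s) L"
  have "\<forall>q\<in>set ?P. snd q > 0"
    using pos chart by (auto simp: chart_measure_def positive_terms_def power_mult)
  moreover have "length ?P = Suc n" by (simp add: chart_measure_def len)
  moreover have "distinct (map fst ?P)"
    using chart by (intro chart_measure_distinct[OF hon]) blast
  ultimately obtain Q where Q: "length Q = n" "\<forall>q\<in>set Q. snd q > 0"
    "\<forall>f. degree f < 2 * n \<longrightarrow>
       (\<Sum>q\<leftarrow>?P. snd q * poly f (fst q)) = (\<Sum>q\<leftarrow>Q. snd q * poly f (fst q))"
    using gauss_quadrature by blast
  show ?thesis
  proof (intro exI[of _ "chart_rep r Q"] conjI allI)
    show "length (chart_rep r Q) = n" by (simp add: chart_rep_def Q(1))
    have "(z, 1 - r * z) \<noteq> (0, 0)" for z by auto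
    then show "positive_terms (chart_rep r Q)"
      using Q(2) by (auto simp: chart_rep_def positive_terms_def)
    fix x y
    have "degree ([:y, x - r * y:] ^ (2 * s)) \<le> degree [:y, x - r * y:] * (2 * s)"
      by (rule degree_power_le)
    also have "\<dots> \<le> 1 * (2 * s)" by (intro mult_right_mono) simp_all
    finally have deg: "degree ([:y, x - r * y:] ^ (2 * s)) < 2 * n" using sn by linarith
    have "power_sum (chart_rep r Q) (2 * s) x y
        = (\<Sum>q\<leftarrow>Q. snd q * poly ([:y, x - r * y:] ^ (2 * s)) (fst q))"
      by (rule power_sum_chart_rep)
    also have "\<dots> = (\<Sum>q\<leftarrow>?P. snd q * poly ([:y, x - r * y:] ^ (2 * s)) (fst q))"
      using Q(3)[rule_format, OF deg] by (rule sym)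
    also have "\<dots> = power_sum L (2 * s) x y"
      using chart by (intro power_sum_chart_measure[symmetric]) blast
    finally show "power_sum (chart_rep r Q) (2 * s) x y = power_sum L (2 * s) x y" .
  qed
qed

lemma positive_rep_reducible:
  assumes hon: "honest L" and pos: "positive_terms L" and len: "length L \<ge> s + 2"
  shows "\<exists>M. honest M \<and> positive_terms M \<and> length M < length L \<and>
    (\<forall>x y. power_sum M (2 * s) x y = power_sum L (2 * s) x y)"
proof -
  define L1 R where "L1 = take (s + 2) L" and "R = drop (s + 2) L"
  have "positive_terms L1" "positive_terms R"
    using pos by (auto simp: positive_terms_def L1_def R_def dest: in_set_takeD in_set_dropD)
  moreover have "honest L1" "length L1 = Suc (s + 1)"
    using honest_take[OF hon] len by (simp_all add: L1_def)
  ultimately obtain N where N: "length N = s + 1" "positive_terms N"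
    "\<forall>x y. power_sum N (2 * s) x y = power_sum L1 (2 * s) x y"
    using positive_rep_shorten[of L1 "s + 1" s] by auto
  have "positive_terms (N @ R)"
    using N(2) \<open>positive_terms R\<close> by (auto simp: positive_terms_def)
  then obtain M where M: "honest M" "positive_terms M" "length M \<le> length (N @ R)"
    "\<forall>x y. power_sum M (2 * s) x y = power_sum (N @ R) (2 * s) x y"
    using merge_proportional_terms by blast
  have "L = L1 @ R" by (simp add: L1_def R_def)
  then have "\<forall>x y. power_sum M (2 * s) x y = power_sum L (2 * s) x y"
    using M(4) N(3) by (simp add: power_sum_append)
  moreover have "length M < length L" using M(3) N(1) len by (simp add: R_def)
  ultimately show ?thesis using M(1,2) by blast
qed

lemma is_rep_iff_power_sum:
  "is_rep s p L \<longleftrightarrow> (\<forall>t\<in>set L. fst t \<noteq> 0) \<and> (\<forall>x y. p x y = power_sum L (2 * s) x y)"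
  by (simp add: is_rep_def power_sum_def)

lemma badge_all_positive: "\<forall>t\<in>set M. fst t > 0 \<Longrightarrow> badge M = (length M, 0)"
  by (auto simp: badge_def filter_id_conv filter_empty_conv)

text \<open>Every signature is the badge of an honest representation with non-zero directions: a
  zero direction can only occur in a one-term representation of \<open>0\<close>, whose signature is
  \<open>(0, 0)\<close>, realised by the empty representation.\<close>
lemma signature_rep_nonzero_directions:
  assumes s: "s \<ge> 1" and sig: "is_signature s p u"
  shows "\<exists>L. is_rep s p L \<and> honest L \<and> badge L = u \<and> (\<forall>t\<in>set L. snd t \<noteq> (0, 0))"
proof -
  obtain L where L: "is_rep s p L" "honest L" "badge L = u"
    using sig unfolding is_signature_def badges_def by auto
  show ?thesis
  proof (cases "\<forall>t\<in>set L. snd t \<noteq> (0, 0)")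
    case True
    then show ?thesis using L by blast
  next
    case False
    then obtain t where t: "t \<in> set L" "snd t = (0, 0)" by blast
    have "length L < 2" using honest_nonzero_direction[OF L(2) _ t(1)] t(2) by linarith
    then have "L = [t]" using t(1) by (cases L) auto
    then have "fst t \<noteq> 0" "\<forall>x y. p x y = 0"
      using L(1) t(2) s by (cases t; auto simp: is_rep_def)+
    then have "([] :: (real \<times> real \<times> real) list) \<in> {L. is_rep s p L \<and> honest L}"
      by (simp add: is_rep_def honest_def)
    then have "(0, 0) \<in> badges s p" unfolding badges_def by (force simp: badge_def)
    then have "u = (0, 0)" using sig unfolding is_signature_def badge_le_def by auto
    then show ?thesis using L(3) \<open>L = [t]\<close> \<open>fst t \<noteq> 0\<close> by (auto simp: badge_def split: if_splits)
  qed
qed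

lemma positive_signature_bound:
  assumes s: "s \<ge> 1" and sig: "is_signature s p (a, 0)"
  shows "a \<le> s + 1"
proof (rule ccontr)
  assume "\<not> a \<le> s + 1"
  obtain L where L: "is_rep s p L" "honest L" "badge L = (a, 0)" "\<forall>t\<in>set L. snd t \<noteq> (0, 0)"
    using signature_rep_nonzero_directions[OF s sig] by blast
  have "filter (\<lambda>t. fst t < 0) L = []" using L(3) by (simp add: badge_def)
  then have "\<forall>t\<in>set L. fst t > 0"
    using L(1) unfolding is_rep_iff_power_sum by (force simp: filter_empty_conv)
  then have pos: "positive_terms L" and a: "a = length L"
    using L(3,4) badge_all_positive[of L] by (auto simp: positive_terms_def)
  obtain M where M: "honest M" "positive_terms M" "length M < length L"
    "\<forall>x y. power_sum M (2 * s) x y = power_sum L (2 * s) x y"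
    using positive_rep_reducible[OF L(2) pos, where s = s] \<open>\<not> a \<le> s + 1\<close> a by auto
  have "is_rep s p M" using M(2,4) L(1) by (auto simp: is_rep_iff_power_sum positive_terms_def)
  moreover have "badge M = (length M, 0)"
    using M(2) badge_all_positive[of M] by (simp add: positive_terms_def)
  ultimately have "(length M, 0) \<in> badges s p"
    using M(1) unfolding badges_def by (auto intro!: exI[of _ M])
  moreover have "badge_le (length M, 0) (a, 0)" using M(3) a by (simp add: badge_le_def)
  ultimately show False using sig M(3) a unfolding is_signature_def by auto
qed

definition negate_rep :: "(real \<times> real \<times> real) list \<Rightarrow> (real \<times> real \<times> real) list" where
  "negate_rep L = map (\<lambda>(l, a, b). (- l, a, b)) L"

lemma power_sum_negate_rep: "power_sum (negate_rep L) n x y = - power_sum L n x y"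
  by (induction L) (auto simp: negate_rep_def)

lemma is_rep_negate_rep: "is_rep s p L \<Longrightarrow> is_rep s (\<lambda>x y. - p x y) (negate_rep L)"
  unfolding is_rep_iff_power_sum power_sum_negate_rep by (auto simp: negate_rep_def)

lemma honest_negate_rep: "honest (negate_rep L) \<longleftrightarrow> honest L"
  by (simp add: honest_def negate_rep_def case_prod_beta)

lemma badge_negate_rep: "badge (negate_rep L) = (snd (badge L), fst (badge L))"
  by (induction L) (auto simp: badge_def negate_rep_def)

lemma badges_negate:
  assumes "(a, b) \<in> badges s p"
  shows "(b, a) \<in> badges s (\<lambda>x y. - p x y)"
proof -
  obtain L where L: "is_rep s p L" "honest L" "badge L = (a, b)"
    using assms unfolding badges_def by auto
  then have "is_rep s (\<lambda>x y. - p x y) (negate_rep L)" "honest (negate_rep L)"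
    "badge (negate_rep L) = (b, a)"
    by (simp_all add: is_rep_negate_rep honest_negate_rep badge_negate_rep)
  then show ?thesis unfolding badges_def by (auto intro!: exI[of _ "negate_rep L"])
qed

lemma is_signature_negate:
  assumes sig: "is_signature s p (a, b)"
  shows "is_signature s (\<lambda>x y. - p x y) (b, a)"
  unfolding is_signature_def
proof (intro conjI ballI impI)
  show "(b, a) \<in> badges s (\<lambda>x y. - p x y)"
    using sig badges_negate by (simp add: is_signature_def)
  fix v assume v: "v \<in> badges s (\<lambda>x y. - p x y)" "badge_le v (b, a)"
  obtain d c where vdc: "v = (d, c)" by (cases v)
  have "(c, d) \<in> badges s p"
    using badges_negate[of d c s "\<lambda>x y. - p x y"] v(1) vdc by simp
  moreover have "badge_le (c, d) (a, b)" using v(2) vdc by (simp add: badge_le_def)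
  ultimately have "(c, d) = (a, b)" using sig unfolding is_signature_def by blast
  then show "v = (b, a)" using vdc by simp
qed

text \<open>If each term indexed by \<open>I\<close> of an honest representation is parallel to one of the
  non-zero directions \<open>v j\<close> (\<open>j \<in> J\<close>), then \<open>|I| \<le> |J|\<close>: two such terms parallel to the same
  direction would be parallel to each other.\<close>
lemma card_le_by_parallel_map:
  assumes hon: "honest L" and I: "I \<subseteq> {..<length L}" and J: "finite J"
    and nzL: "\<forall>i\<in>I. snd (L ! i) \<noteq> (0, 0)" and nzv: "\<forall>j\<in>J. v j \<noteq> (0, 0)"
    and par: "\<forall>i\<in>I. \<exists>j\<in>J. det2 (snd (L ! i)) (v j) = 0"
  shows "card I \<le> card J"
proof -
  obtain \<phi> where \<phi>: "\<And>i. i \<in> I \<Longrightarrow> \<phi> i \<in> J \<and> det2 (snd (L ! i)) (v (\<phi> i)) = 0"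
    using par by metis
  have "inj_on \<phi> I"
  proof (rule inj_onI, rule ccontr)
    fix i1 i2 assume i: "i1 \<in> I" "i2 \<in> I" "\<phi> i1 = \<phi> i2" "i1 \<noteq> i2"
    have "det2 (snd (L ! i1)) (snd (L ! i2)) = 0"
      using det2_zero_trans \<phi>[OF i(1)] \<phi>[OF i(2)] i(3) nzv by metis
    then show False using honest_det2[OF hon] i I nzL by blast
  qed
  moreover have "\<phi> ` I \<subseteq> J" using \<phi> by auto
  ultimately show ?thesis using J by (rule card_inj_on_le)
qed

text \<open>Two representations of the same form, the first honest, together with at most \<open>s\<close>
  negative terms of the first and positive terms of the second: then every positive term of
  the first is parallel to a positive term of the second (apply \<open>positive_term_parallel\<close> to
  their difference; honesty excludes the first one's own negative terms).\<close>
lemma positive_terms_parallel_across: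
  assumes L1: "is_rep s p L1" "honest L1" "\<forall>t\<in>set L1. snd t \<noteq> (0, 0)"
    and L2: "is_rep s p L2"
    and few: "length (filter (\<lambda>t. fst t < 0) L1) + length (filter (\<lambda>t. fst t > 0) L2) \<le> s"
    and i: "i < length L1" "fst (L1 ! i) > 0"
  shows "\<exists>j<length L2. fst (L2 ! j) > 0 \<and> det2 (snd (L1 ! i)) (snd (L2 ! j)) = 0"
proof -
  define L where "L = L1 @ negate_rep L2"
  define ks where "ks = map snd (filter (\<lambda>t. fst t < 0) L1) @ map snd (filter (\<lambda>t. fst t > 0) L2)"
  have zero: "\<forall>x y. power_sum L (2 * s) x y = 0"
    using L1(1) L2(1) by (simp add: L_def power_sum_append power_sum_negate_rep is_rep_iff_power_sum)
  have len: "length ks \<le> s" using few by (simp add: ks_def)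
  have neg: "\<forall>(l, a', b')\<in>set L. l < 0 \<longrightarrow> (a', b') \<in> set ks"
    by (auto simp: L_def ks_def negate_rep_def image_iff)
  obtain l0 a0 b0 where t0: "L1 ! i = (l0, a0, b0)" by (cases "L1 ! i")
  have "(l0, a0, b0) \<in> set L" "l0 > 0" "(a0, b0) \<noteq> (0, 0)"
    using i t0 L1(3) nth_mem[of i L1] by (auto simp: L_def)
  from positive_term_parallel[OF zero len neg this]
  obtain k where k: "k \<in> set ks" "det2 (snd (L1 ! i)) k = 0"
    using t0 by auto
  show ?thesis
  proof (cases "k \<in> set (map snd (filter (\<lambda>t. fst t < 0) L1))")
    case True
    then obtain j where j: "j < length L1" "fst (L1 ! j) < 0" "k = snd (L1 ! j)"
      by (auto simp: in_set_conv_nth)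
    moreover have "i \<noteq> j" using i j(2) by auto
    ultimately have "det2 (snd (L1 ! i)) k \<noteq> 0"
      using honest_det2[OF L1(2)] i L1(3) by auto
    then show ?thesis using k(2) by simp
  next
    case False
    then obtain j where "j < length L2" "fst (L2 ! j) > 0" "k = snd (L2 ! j)"
      using k(1) by (auto simp: ks_def in_set_conv_nth)
    then show ?thesis using k(2) by auto
  qed
qed

lemma badges_cross_bound:
  assumes L1: "is_rep s p L1" "honest L1" "badge L1 = (a, b)" "\<forall>t\<in>set L1. snd t \<noteq> (0, 0)"
    and L2: "is_rep s p L2" "badge L2 = (c, d)" "\<forall>t\<in>set L2. snd t \<noteq> (0, 0)"
    and bc: "b + c \<le> s"
  shows "a \<le> c"
proof -
  define I J where "I = {i. i < length L1 \<and> fst (L1 ! i) > 0}"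
    and "J = {j. j < length L2 \<and> fst (L2 ! j) > 0}"
  have "\<forall>i\<in>I. \<exists>j\<in>J. det2 (snd (L1 ! i)) (snd (L2 ! j)) = 0"
    using positive_terms_parallel_across[OF L1(1,2,4) L2(1)] L1(3) L2(2) bc
    by (fastforce simp: I_def J_def badge_def)
  then have "card I \<le> card J"
    using card_le_by_parallel_map[OF L1(2), of I J "\<lambda>j. snd (L2 ! j)"] L1(4) L2(3)
    by (auto simp: I_def J_def)
  then show ?thesis
    using L1(3) L2(2) by (simp add: badge_def I_def J_def length_filter_conv_card)
qed

lemma signatures_cross_bound:
  assumes s: "s \<ge> 1" and sab: "is_signature s p (a, b)" and scd: "is_signature s p (c, d)"
    and ac: "a > c"
  shows "b + c \<ge> s + 1"
proof (rule ccontr)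
  assume "\<not> b + c \<ge> s + 1"
  obtain L1 where L1: "is_rep s p L1" "honest L1" "badge L1 = (a, b)" "\<forall>t\<in>set L1. snd t \<noteq> (0, 0)"
    using signature_rep_nonzero_directions[OF s sab] by blast
  obtain L2 where L2: "is_rep s p L2" "badge L2 = (c, d)" "\<forall>t\<in>set L2. snd t \<noteq> (0, 0)"
    using signature_rep_nonzero_directions[OF s scd] by blast
  have "a \<le> c" using badges_cross_bound[OF L1 L2] \<open>\<not> b + c \<ge> s + 1\<close> by linarith
  then show False using ac by simp
qed

text \<open>Main lemma: for signatures \<open>(a, b)\<close>, \<open>(c, d)\<close> with \<open>a > c\<close> and \<open>b < d\<close> we have the cross
  bound and \<open>b, c \<noteq> 0\<close>: \<open>b = 0\<close> would give \<open>a \<le> s + 1 \<le> b + c < a\<close>, and \<open>c = 0\<close> the same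
  for the signature \<open>(d, c)\<close> of \<open>-p\<close>.\<close>
lemma signature_pair_bounds:
  assumes s: "s \<ge> 1" and sab: "is_signature s p (a, b)" and scd: "is_signature s p (c, d)"
    and ac: "a > c" and bd: "b < d"
  shows "b + c \<ge> s + 1 \<and> b \<ge> 1 \<and> c \<ge> 1"
proof -
  have bc: "b + c \<ge> s + 1" using signatures_cross_bound[OF s sab scd ac] .
  have "b \<noteq> 0"
  proof
    assume "b = 0"
    then have "a \<le> s + 1" using positive_signature_bound[OF s] sab by simp
    then show False using bc \<open>b = 0\<close> ac by linarith
  qed
  moreover have "c \<noteq> 0"
  proof
    assume "c = 0"
    then have "d \<le> s + 1" using positive_signature_bound[OF s] is_signature_negate[OF scd] by simp
    then show False using bc \<open>c = 0\<close> bd by linarith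
  qed
  ultimately show ?thesis using bc by simp
qed

theorem theorem3p2:
  fixes s :: nat and p :: "real \<Rightarrow> real \<Rightarrow> real" and a b c d :: nat
  assumes "s \<ge> 1" and "binary_form (2 * s) p"
    and "is_signature s p (a, b)" and "is_signature s p (c, d)"
    and "a > c" and "b < d"
  shows "a + d \<ge> s + 3 \<and> b + c \<ge> s + 1 \<and> max (a + b) (c + d) \<ge> s + 2 \<and>
         a \<ge> 1 \<and> b \<ge> 1 \<and> c \<ge> 1 \<and> d \<ge> 1"
  using signature_pair_bounds[OF assms(1,3,4,5,6)] assms(5,6) by auto

end
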